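(* Let $N\ge1$, let the parameter space $\Theta$ of the correlated Bernoulli random graph model be nondegenerate, let $g:\Theta\to\mathbb{R}$, and let $S:\mathcal{X}\to\mathbb{R}$ be an unbiased estimator of $g(\theta)$. Then there exists a uniformly minimum variance unbiased (UMVU) estimator of $g(\theta)$, and in fact $\overline{S}$ is the UMVU estimator of $g(\theta)$.
   Context: Correlated Bernoulli random graph model: fix a positive integer $N$ and let $\mathcal{R}=\{(p_1,\dots,p_N,\varrho_1,\dots,\varrho_N): p_i,\varrho_i\in[0,1]\}$. A parameter space is any subset $\Theta\subseteq\mathcal{R}$. For $\theta\in\Theta$, the random vectors $X,Y\in\{0,1\}^N$ are such that the pairs $(X_i,Y_i)$ are independent across $i$; $X_i,Y_i$ are each marginally Bernoulli$(p_i)$ with Pearson correlation $\varrho_i$ (so $\mathbb{P}(X_i=Y_i=1)=p_i^2+\varrho_ip_i(1-p_i)$, $\mathbb{P}(X_i=Y_i=0)=(1-p_i)^2+\varrho_ip_i(1-p_i)$, $\mathbb{P}(X_i=1,Y_i=0)=\mathbb{P}(X_i=0,Y_i=1)=(1-\varrho_i)p_i(1-p_i)$). Sample space $\mathcal{X}=\{(x,y):x,y\in\{0,1\}^N\}$; an estimator/statistic is a function $\mathcal{X}\to\mathbb{R}$, unbiased for $g$ if $\mathbb{E}_\theta S=g(\theta)$ for all $\theta\in\Theta$. Let $\mathcal{R}^o=\{(p_1,\dots,p_N,0,\dots,0):p_i\in\mathbb{R}\}$; $\Theta$ is nondegenerate if $\Theta\cap\mathcal{R}^o$ has an interior point relative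 to $\mathcal{R}^o$. The disagreement vector $\mathcal{H}:\mathcal{X}\to\{0,\star,1\}^N$ has $i$th component $1$ if $x_i=y_i=1$, $0$ if $x_i=y_i=0$, $\star$ if $x_i\neq y_i$; $\mathcal{X}_h=\mathcal{H}^{-1}(h)$. The balanced variant of $S$ is $\overline{S}(x,y)=\frac{1}{|\mathcal{X}_h|}\sum_{(x',y')\in\mathcal{X}_h}S(x',y')$ with $h=\mathcal{H}(x,y)$. *)

theory Defs
  imports Complex_Main
begin

text \<open>N is the cardinality
  of the finite index type 'n (so N \<ge> 1 automatically). A 0/1 vector is a function
  'n \<Rightarrow> bool (True = 1).\<close>

type_synonym 'n sample = "('n \<Rightarrow> bool) \<times> ('n \<Rightarrow> bool)"
type_synonym 'n param = "('n \<Rightarrow> real) \<times> ('n \<Rightarrow> real)"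

definition R_space :: "'n param set" where
  "R_space = {(p, \<rho>). \<forall>i. p i \<in> {0..1} \<and> \<rho> i \<in> {0..1}}"

text \<open>Joint probability of (X_i, Y_i) = (a, b) for marginal p and correlation r.\<close>
definition cb_pmf :: "real \<Rightarrow> real \<Rightarrow> bool \<Rightarrow> bool \<Rightarrow> real" where
  "cb_pmf p r a b =
     (if a \<and> b then p\<^sup>2 + r * p * (1 - p)
      else if \<not> a \<and> \<not> b then (1 - p)\<^sup>2 + r * p * (1 - p)
      else (1 - r) * p * (1 - p))"

definition cb_prob :: "'n::finite param \<Rightarrow> 'n sample \<Rightarrow> real" where
  "cb_prob \<theta> z = (\<Prod>i\<in>UNIV. cb_pmf (fst \<theta> i) (snd \<theta> i) (fst z i) (snd z i))"

definition cb_expect :: "'n::finite param \<Rightarrow> ('n sample \<Rightarrow> real) \<Rightarrow> real" where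
  "cb_expect \<theta> S = (\<Sum>z\<in>UNIV. cb_prob \<theta> z * S z)"

definition cb_var :: "'n::finite param \<Rightarrow> ('n sample \<Rightarrow> real) \<Rightarrow> real" where
  "cb_var \<theta> S = cb_expect \<theta> (\<lambda>z. (S z - cb_expect \<theta> S)\<^sup>2)"

definition unbiased :: "'n::finite param set \<Rightarrow> ('n param \<Rightarrow> real) \<Rightarrow> ('n sample \<Rightarrow> real) \<Rightarrow> bool" where
  "unbiased \<Theta> g S \<longleftrightarrow> (\<forall>\<theta>\<in>\<Theta>. cb_expect \<theta> S = g \<theta>)"

definition UMVU :: "'n::finite param set \<Rightarrow> ('n param \<Rightarrow> real) \<Rightarrow> ('n sample \<Rightarrow> real) \<Rightarrow> bool" where
  "UMVU \<Theta> g T \<longleftrightarrow> unbiased \<Theta> g T \<and>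
     (\<forall>S. unbiased \<Theta> g S \<longrightarrow> (\<forall>\<theta>\<in>\<Theta>. cb_var \<theta> T \<le> cb_var \<theta> S))"

text \<open>\<Theta> is nondegenerate: \<Theta> \<inter> \<R>^o has an interior point relative to \<R>^o, where
  \<R>^o = {(p, 0) | p \<in> \<real>^N}. Interior is written out with a sup-norm ball.\<close>
definition nondegenerate :: "'n::finite param set \<Rightarrow> bool" where
  "nondegenerate \<Theta> \<longleftrightarrow> (\<exists>p0 (e::real). e > 0 \<and>
      (\<forall>p. (\<forall>i. \<bar>p i - p0 i\<bar> < e) \<longrightarrow> (p, (\<lambda>_. 0)) \<in> \<Theta>))"

datatype hval = HZero | HStar | HOne

definition disagree :: "'n sample \<Rightarrow> 'n \<Rightarrow> hval" where
  "disagree z i = (if fst z i \<and> snd z i then HOne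
                   else if \<not> fst z i \<and> \<not> snd z i then HZero else HStar)"

definition balanced :: "('n::finite sample \<Rightarrow> real) \<Rightarrow> 'n sample \<Rightarrow> real" where
  "balanced S z = (let A = {z'. disagree z' = disagree z} in (\<Sum>z'\<in>A. S z') / real (card A))"

end

theory Submission
  imports Defs
begin

text \<open>The probability of a sample depends only on its disagreement vector, so the balanced
  variant, i.e. the average of S over the fibres of the disagreement vector, is the
  conditional expectation of S given that vector; by the Rao--Blackwell argument it has
  the same mean and no larger variance. On the submodel \<open>\<rho> = 0\<close> the disagreement vector
  is moreover complete: if a function of it has mean zero for all p in an open box, then,
  coordinate by coordinate, each mean is a quadratic polynomial
  \<open>t\<^sup>2 A + (1 - t)\<^sup>2 B + t (1 - t) C\<close> in \<open>t = p j\<close> vanishing on an interval, so A, B, C vanish.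
  Hence any two unbiased estimators have the same balanced variant (Lehmann--Scheffe).\<close>

definition disagree_invariant :: "('n sample \<Rightarrow> 'a) \<Rightarrow> bool" where
  "disagree_invariant F \<longleftrightarrow> (\<forall>z z'. disagree z = disagree z' \<longrightarrow> F z = F z')"

lemma disagree_invariantD:
  "disagree_invariant F \<Longrightarrow> disagree z = disagree z' \<Longrightarrow> F z = F z'"
  unfolding disagree_invariant_def by blast

lemma disagree_invariant_balanced: "disagree_invariant (balanced S)"
  unfolding disagree_invariant_def balanced_def by simp

lemma cb_pmf_eq_if_disagree_eq:
  "disagree z i = disagree z' i \<Longrightarrow>
    cb_pmf p r (fst z i) (snd z i) = cb_pmf p r (fst z' i) (snd z' i)"
  unfolding disagree_def cb_pmf_def by (auto split: if_splits)

lemma disagree_invariant_cb_prob: "disagree_invariant (cb_prob \<theta>)"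
  unfolding disagree_invariant_def cb_prob_def
  by (metis (no_types, lifting) cb_pmf_eq_if_disagree_eq prod.cong)

lemma cb_expect_diff:
  "cb_expect \<theta> (\<lambda>z. F z - G z) = cb_expect \<theta> F - cb_expect \<theta> G"
  unfolding cb_expect_def by (simp add: right_diff_distrib sum_subtractf)

lemma cb_prob_nonneg:
  assumes "\<theta> \<in> R_space"
  shows "cb_prob \<theta> z \<ge> 0"
proof -
  have "cb_pmf p r a b \<ge> 0" if "p \<in> {0..1}" "r \<in> {0..1}" for p r :: real and a b
    using that unfolding cb_pmf_def by auto
  then show ?thesis
    using assms unfolding cb_prob_def R_space_def by (auto intro!: prod_nonneg)
qed

subsection \<open>Rao--Blackwell\<close>

lemma sum_disagree_invariant_mult_balanced:
  fixes F S :: "'n::finite sample \<Rightarrow> real"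
  assumes F: "disagree_invariant F"
  shows "(\<Sum>z\<in>UNIV. F z * balanced S z) = (\<Sum>z\<in>UNIV. F z * S z)"
proof -
  define A where "A z = {z'. disagree z' = disagree z}" for z :: "'n sample"
  have card_A: "card (A z) > 0" for z
  proof -
    have "z \<in> A z" by (simp add: A_def)
    then show ?thesis by (metis card_gt_0_iff empty_iff finite)
  qed
  have fibre:
    "F z * balanced S z = (\<Sum>z'\<in>UNIV. if z \<in> A z' then F z' * S z' / card (A z') else 0)" for z
  proof -
    have same_fibre: "F z' = F z \<and> A z' = A z" if "z' \<in> A z" for z'
    proof
      show "F z' = F z"
        using that by (intro disagree_invariantD[OF F]) (simp add: A_def)
      show "A z' = A z"
        using that by (simp add: A_def)
    qed
    have "F z * balanced S z = (\<Sum>z'\<in>A z. F z' * S z' / card (A z'))"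
      using same_fibre
      by (simp add: balanced_def A_def[symmetric] Let_def sum_divide_distrib sum_distrib_left)
    also have "A z = {z' \<in> UNIV. z \<in> A z'}"
      unfolding A_def by auto
    finally show ?thesis
      by (simp only: sum.inter_filter[OF finite])
  qed
  have "(\<Sum>z\<in>UNIV. F z * balanced S z)
      = (\<Sum>z'\<in>UNIV. \<Sum>z\<in>UNIV. if z \<in> A z' then F z' * S z' / card (A z') else 0)"
    unfolding fibre by (rule sum.swap)
  also have "\<dots> = (\<Sum>z'\<in>UNIV. card (A z') * (F z' * S z' / card (A z')))"
    by (simp only: sum.inter_filter[OF finite, symmetric] sum_constant) simp
  also have "\<dots> = (\<Sum>z\<in>UNIV. F z * S z)"
    using card_A by (simp add: less_imp_neq[symmetric])
  finally show ?thesis .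
qed

lemma cb_expect_balanced: "cb_expect \<theta> (balanced S) = cb_expect \<theta> S"
  unfolding cb_expect_def
  by (rule sum_disagree_invariant_mult_balanced[OF disagree_invariant_cb_prob])

lemma cb_var_balanced_le:
  fixes S :: "'n::finite sample \<Rightarrow> real"
  assumes "\<theta> \<in> R_space"
  shows "cb_var \<theta> (balanced S) \<le> cb_var \<theta> S"
proof -
  define P where "P = cb_prob \<theta>"
  define B where "B = balanced S"
  define m where "m = cb_expect \<theta> S"
  have mean_B: "cb_expect \<theta> B = m"
    unfolding B_def m_def by (rule cb_expect_balanced)
  have residual_orthogonal: "(\<Sum>z\<in>UNIV. P z * (B z - m) * (S z - B z)) = 0"
  proof -
    have "disagree_invariant (\<lambda>z. P z * (B z - m))"
      unfolding disagree_invariant_def P_def B_def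
      using disagree_invariantD[OF disagree_invariant_cb_prob]
        disagree_invariantD[OF disagree_invariant_balanced]
      by metis
    then have "(\<Sum>z\<in>UNIV. P z * (B z - m) * B z) = (\<Sum>z\<in>UNIV. P z * (B z - m) * S z)"
      unfolding B_def by (rule sum_disagree_invariant_mult_balanced)
    then show ?thesis
      by (simp add: right_diff_distrib sum_subtractf)
  qed
  have "cb_var \<theta> B \<le> (\<Sum>z\<in>UNIV. P z * (S z - B z)\<^sup>2) + cb_var \<theta> B"
    unfolding P_def using cb_prob_nonneg[OF assms] by (auto intro: sum_nonneg)
  also have "\<dots> = (\<Sum>z\<in>UNIV. P z * (S z - B z)\<^sup>2) + cb_var \<theta> B
      + 2 * (\<Sum>z\<in>UNIV. P z * (B z - m) * (S z - B z))"
    using residual_orthogonal by simp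
  also have "\<dots> = (\<Sum>z\<in>UNIV. P z * (S z - B z)\<^sup>2 + P z * (B z - m)\<^sup>2
      + 2 * (P z * (B z - m) * (S z - B z)))"
    unfolding cb_var_def mean_B cb_expect_def[of \<theta> "\<lambda>z. (B z - m)\<^sup>2"] P_def[symmetric]
    by (simp only: sum.distrib sum_distrib_left)
  also have "\<dots> = cb_var \<theta> S"
    unfolding cb_var_def cb_expect_def[of \<theta> "\<lambda>z. (S z - m)\<^sup>2" for m] P_def[symmetric]
      m_def[symmetric]
    by (rule sum.cong) (simp_all add: power2_eq_square algebra_simps)
  finally show ?thesis
    unfolding B_def .
qed

subsection \<open>Completeness on the uncorrelated submodel\<close>

lemma quadratic_eq_0_on_ball:
  fixes \<alpha> \<beta> \<gamma> c e :: real
  assumes "e > 0" and vanish: "\<And>t. \<bar>t - c\<bar> < e \<Longrightarrow> \<alpha> * t\<^sup>2 + \<beta> * t + \<gamma> = 0"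
  shows "\<alpha> = 0" "\<beta> = 0" "\<gamma> = 0"
proof -
  define d where "d = e / 2"
  have "d > 0" using \<open>e > 0\<close> by (simp add: d_def)
  have at_minus: "\<alpha> * (c - d)\<^sup>2 + \<beta> * (c - d) + \<gamma> = 0"
    and at_centre: "\<alpha> * c\<^sup>2 + \<beta> * c + \<gamma> = 0"
    and at_plus: "\<alpha> * (c + d)\<^sup>2 + \<beta> * (c + d) + \<gamma> = 0"
    using \<open>e > 0\<close> by (auto intro!: vanish simp: d_def)
  have "2 * \<alpha> * d\<^sup>2 = (\<alpha> * (c + d)\<^sup>2 + \<beta> * (c + d) + \<gamma>) + (\<alpha> * (c - d)\<^sup>2 + \<beta> * (c - d) + \<gamma>)
      - 2 * (\<alpha> * c\<^sup>2 + \<beta> * c + \<gamma>)"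
    by (simp add: power2_eq_square algebra_simps)
  also have "\<dots> = 0"
    using at_minus at_centre at_plus by simp
  finally show "\<alpha> = 0"
    using \<open>d > 0\<close> by simp
  have "2 * \<beta> * d + 4 * \<alpha> * c * d
      = (\<alpha> * (c + d)\<^sup>2 + \<beta> * (c + d) + \<gamma>) - (\<alpha> * (c - d)\<^sup>2 + \<beta> * (c - d) + \<gamma>)"
    by (simp add: power2_eq_square algebra_simps)
  also have "\<dots> = 0"
    using at_minus at_plus by simp
  finally show "\<beta> = 0"
    using \<open>d > 0\<close> \<open>\<alpha> = 0\<close> by simp
  then show "\<gamma> = 0" using at_centre \<open>\<alpha> = 0\<close> by simp
qed

lemma bernstein_quadratic_eq_0_on_ball:
  fixes A B C c e :: real
  assumes "e > 0"
    and "\<And>t. \<bar>t - c\<bar> < e \<Longrightarrow> t\<^sup>2 * A + (1 - t)\<^sup>2 * B + t * (1 - t) * C = 0"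
  shows "A = 0" "B = 0" "C = 0"
proof -
  have "(A + B - C) * t\<^sup>2 + (C - 2 * B) * t + B = 0" if "\<bar>t - c\<bar> < e" for t
    using assms(2)[OF that] by (simp add: power2_eq_square algebra_simps)
  from quadratic_eq_0_on_ball[where c = c, OF \<open>e > 0\<close> this]
  show "A = 0" "B = 0" "C = 0" by linarith+
qed

definition samples_on :: "'n set \<Rightarrow> 'n sample set" where
  "samples_on J = {z. \<forall>i. i \<notin> J \<longrightarrow> \<not> fst z i \<and> \<not> snd z i}"

definition sample_upd :: "'n sample \<Rightarrow> 'n \<Rightarrow> bool \<Rightarrow> bool \<Rightarrow> 'n sample" where
  "sample_upd z j a b = ((fst z)(j := a), (snd z)(j := b))"

text \<open>The expectation in the model whose coordinates outside J are constantly 0.\<close>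
definition cb_expect_on :: "'n set \<Rightarrow> ('n \<Rightarrow> real) \<Rightarrow> ('n \<Rightarrow> real) \<Rightarrow> ('n sample \<Rightarrow> real) \<Rightarrow> real"
  where "cb_expect_on J p r F =
    (\<Sum>z\<in>samples_on J. (\<Prod>i\<in>J. cb_pmf (p i) (r i) (fst z i) (snd z i)) * F z)"

lemma cb_expect_on_UNIV: "cb_expect_on (UNIV :: 'n::finite set) p r F = cb_expect (p, r) F"
  unfolding cb_expect_on_def cb_expect_def cb_prob_def samples_on_def by simp

lemma samples_on_empty: "samples_on {} = {(\<lambda>_. False, \<lambda>_. False)}"
  unfolding samples_on_def by (auto simp: prod_eq_iff)

lemma sample_upd_in_samples_on:
  "z \<in> samples_on J \<Longrightarrow> sample_upd z j a b \<in> samples_on (insert j J)"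
  unfolding samples_on_def sample_upd_def by auto

lemma sample_upd_reset:
  assumes "z \<in> samples_on (insert j J)"
  shows "sample_upd z j False False \<in> samples_on J"
    and "sample_upd (sample_upd z j False False) j (fst z j) (snd z j) = z"
  using assms unfolding samples_on_def sample_upd_def by (auto simp: prod_eq_iff)

lemma disagree_invariant_sample_upd:
  assumes "disagree_invariant F"
  shows "disagree_invariant (\<lambda>z. F (sample_upd z j a b))"
proof -
  have "disagree (sample_upd z j a b) i = disagree (sample_upd z' j a b) i"
    if "disagree z = disagree z'" for z z' i
    using fun_cong[OF that, of i] unfolding disagree_def sample_upd_def by (auto split: if_splits)
  then show ?thesis
    using assms unfolding disagree_invariant_def by (metis ext)
qed

lemma disagree_invariant_sample_upd_swap:
  "disagree_invariant F \<Longrightarrow> F (sample_upd z j True False) = F (sample_upd z j False True)"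
  by (erule disagree_invariantD) (simp add: disagree_def sample_upd_def fun_eq_iff)

lemma sum_samples_on_insert:
  assumes "j \<notin> J"
  shows "(\<Sum>z\<in>samples_on (insert j J). W z)
    = (\<Sum>z\<in>samples_on J. \<Sum>(a, b)\<in>UNIV. W (sample_upd z j a b))"
proof -
  have "(\<Sum>z\<in>samples_on (insert j J). W z)
      = (\<Sum>(z, a, b)\<in>samples_on J \<times> UNIV. W (sample_upd z j a b))"
    by (rule sum.reindex_bij_witness[where i = "\<lambda>(z, a, b). sample_upd z j a b"
        and j = "\<lambda>z. (sample_upd z j False False, fst z j, snd z j)"])
      (use assms in \<open>auto simp: sample_upd_in_samples_on sample_upd_reset samples_on_def
      sample_upd_def prod_eq_iff fun_eq_iff\<close>)
  also have "\<dots> = (\<Sum>z\<in>samples_on J. \<Sum>(a, b)\<in>UNIV. W (sample_upd z j a b))"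
    by (subst sum.cartesian_product[symmetric]) (simp add: case_prod_unfold)
  finally show ?thesis .
qed

lemma cb_expect_on_insert:
  fixes p r :: "'n::finite \<Rightarrow> real"
  assumes "j \<notin> J"
  shows "cb_expect_on (insert j J) (p(j := t)) r F
    = (\<Sum>(a, b)\<in>UNIV. cb_pmf t (r j) a b * cb_expect_on J p r (\<lambda>z. F (sample_upd z j a b)))"
proof -
  have factor: "(\<Prod>i\<in>insert j J. cb_pmf ((p(j := t)) i) (r i)
        (fst (sample_upd z j a b) i) (snd (sample_upd z j a b) i))
      = cb_pmf t (r j) a b * (\<Prod>i\<in>J. cb_pmf (p i) (r i) (fst z i) (snd z i))" for z a b
  proof -
    have "(\<Prod>i\<in>J. cb_pmf ((p(j := t)) i) (r i)
          (fst (sample_upd z j a b) i) (snd (sample_upd z j a b) i))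
        = (\<Prod>i\<in>J. cb_pmf (p i) (r i) (fst z i) (snd z i))"
      using assms by (intro prod.cong) (auto simp: sample_upd_def)
    then show ?thesis
      using assms by (simp add: sample_upd_def)
  qed
  have "cb_expect_on (insert j J) (p(j := t)) r F
      = (\<Sum>z\<in>samples_on J. \<Sum>(a, b)\<in>UNIV. cb_pmf t (r j) a b *
          ((\<Prod>i\<in>J. cb_pmf (p i) (r i) (fst z i) (snd z i)) * F (sample_upd z j a b)))"
    unfolding cb_expect_on_def sum_samples_on_insert[OF assms] factor by (simp add: mult.assoc)
  also have "\<dots> = (\<Sum>(a, b)\<in>UNIV. \<Sum>z\<in>samples_on J. cb_pmf t (r j) a b *
          ((\<Prod>i\<in>J. cb_pmf (p i) (r i) (fst z i) (snd z i)) * F (sample_upd z j a b)))"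
    unfolding case_prod_unfold by (rule sum.swap)
  also have "\<dots> = (\<Sum>(a, b)\<in>UNIV. cb_pmf t (r j) a b * cb_expect_on J p r (\<lambda>z. F (sample_upd z j a b)))"
    by (simp add: cb_expect_on_def sum_distrib_left)
  finally show ?thesis .
qed

lemma disagree_invariant_eq_0_on_samples_on:
  fixes F :: "'n::finite sample \<Rightarrow> real" and J :: "'n set"
  assumes "e > 0" and "disagree_invariant F"
    and "\<And>p. (\<forall>i. \<bar>p i - c i\<bar> < e) \<Longrightarrow> cb_expect_on J p (\<lambda>_. 0) F = 0"
    and "z \<in> samples_on J"
  shows "F z = 0"
  using finite[of J] assms(2-4)
proof (induction J arbitrary: F z rule: finite_induct)
  case empty
  have "cb_expect_on {} c (\<lambda>_. 0) F = 0"
    using empty.prems(2) \<open>e > 0\<close> by simp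
  then show ?case
    using empty.prems(3) by (simp add: cb_expect_on_def samples_on_empty)
next
  case (insert j J)
  have bool_pairs:
    "(UNIV :: (bool \<times> bool) set) = {(True, True), (False, False), (True, False), (False, True)}"
    by auto
  have "F (sample_upd z' j a b) = 0" if "z' \<in> samples_on J" for z' a b
  proof (rule insert.IH[OF disagree_invariant_sample_upd[OF insert.prems(1)] _ that])
    fix p assume p: "\<forall>i. \<bar>p i - c i\<bar> < e"
    let ?X = "\<lambda>a b. cb_expect_on J p (\<lambda>_. 0) (\<lambda>z. F (sample_upd z j a b))"
    have swap: "?X True False = ?X False True"
      using disagree_invariant_sample_upd_swap[OF insert.prems(1)] by (simp add: cb_expect_on_def)
    have "t\<^sup>2 * ?X True True + (1 - t)\<^sup>2 * ?X False False
        + t * (1 - t) * (?X True False + ?X False True) = 0"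
      if "\<bar>t - c j\<bar> < e" for t
    proof -
      have "\<forall>i. \<bar>(p(j := t)) i - c i\<bar> < e"
        using p that by simp
      then have "cb_expect_on (insert j J) (p(j := t)) (\<lambda>_. 0) F = 0"
        by (rule insert.prems(2))
      then show ?thesis
        unfolding cb_expect_on_insert[OF insert.hyps(2)] bool_pairs
        by (simp add: cb_pmf_def power2_eq_square algebra_simps)
    qed
    from bernstein_quadratic_eq_0_on_ball[OF \<open>e > 0\<close> this] swap
    show "?X a b = 0"
      by (cases a; cases b) simp_all
  qed
  then show ?case
    using sample_upd_reset[OF insert.prems(3)] by metis
qed

lemma disagree_invariant_eq_0_if_cb_expect_eq_0:
  fixes F :: "'n::finite sample \<Rightarrow> real"
  assumes "e > 0" and "disagree_invariant F"
    and "\<And>p. (\<forall>i. \<bar>p i - c i\<bar> < e) \<Longrightarrow> cb_expect (p, \<lambda>_. 0) F = 0"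
  shows "F z = 0"
  by (rule disagree_invariant_eq_0_on_samples_on[where J = UNIV and c = c, OF assms(1,2)])
    (simp_all add: cb_expect_on_UNIV assms(3) samples_on_def)

lemma balanced_eq_if_unbiased:
  assumes "nondegenerate \<Theta>" and "unbiased \<Theta> g S" and "unbiased \<Theta> g S'"
  shows "balanced S' = balanced S"
proof
  fix z
  obtain p0 e where "e > 0" and box: "\<And>p. (\<forall>i. \<bar>p i - p0 i\<bar> < e) \<Longrightarrow> (p, \<lambda>_. 0) \<in> \<Theta>"
    using assms(1) unfolding nondegenerate_def by blast
  have "(\<lambda>z. balanced S' z - balanced S z) z = 0"
  proof (rule disagree_invariant_eq_0_if_cb_expect_eq_0[OF \<open>e > 0\<close>])
    show "disagree_invariant (\<lambda>z. balanced S' z - balanced S z)"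
      using disagree_invariantD[OF disagree_invariant_balanced]
      unfolding disagree_invariant_def by metis
  next
    fix p assume "\<forall>i. \<bar>p i - p0 i\<bar> < e"
    then have "(p, \<lambda>_. 0) \<in> \<Theta>"
      by (rule box)
    then show "cb_expect (p, \<lambda>_. 0) (\<lambda>z. balanced S' z - balanced S z) = 0"
      using assms(2,3) by (simp add: cb_expect_diff cb_expect_balanced unbiased_def)
  qed
  then show "balanced S' z = balanced S z"
    by simp
qed

theorem theorem3:
  fixes \<Theta> :: "('n::finite) param set"
    and g :: "'n param \<Rightarrow> real"
    and S :: "'n sample \<Rightarrow> real"
  assumes "\<Theta> \<subseteq> R_space"
    and "nondegenerate \<Theta>"
    and "unbiased \<Theta> g S"
  shows "(\<exists>T. UMVU \<Theta> g T) \<and> UMVU \<Theta> g (balanced S)"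
proof -
  have unbiased_balanced: "unbiased \<Theta> g (balanced S)"
    using assms(3) by (simp add: unbiased_def cb_expect_balanced)
  have "cb_var \<theta> (balanced S) \<le> cb_var \<theta> S'" if "unbiased \<Theta> g S'" and "\<theta> \<in> \<Theta>" for S' \<theta>
  proof -
    have "cb_var \<theta> (balanced S) = cb_var \<theta> (balanced S')"
      using balanced_eq_if_unbiased[OF assms(2,3) that(1)] by simp
    also have "\<dots> \<le> cb_var \<theta> S'"
      using that(2) assms(1) by (intro cb_var_balanced_le) auto
    finally show ?thesis .
  qed
  then have "UMVU \<Theta> g (balanced S)"
    using unbiased_balanced by (simp add: UMVU_def)
  then show ?thesis
    by blast
qed

end
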